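(* Let $N\ge1$, $K>0$, $r_1,\dots,r_N>0$, and let $(\mu_{ij})$ be a nonnegative, symmetric, irreducible $N\times N$ matrix. Let $v(t)$ be the solution of $$\frac{dv_i}{dt}=v_i\left[r_i-\frac{1}{K}\sum_{j=1}^Nr_jv_j\right]+\sum_{j=1}^N\mu_{ij}(v_j-v_i),\qquad i=1,\dots,N,$$ with initial datum $v(0)\in[0,\infty)^N$ not identically zero, and let $\mathcal{N}(t)=\sum_{i=1}^Nv_i(t)$. Then $\mathcal{N}(t)$ converges exponentially fast to $K$ as $t\to\infty$. Moreover, for all $t\ge0$, $$\min\{\mathcal{N}_{min}(t),\mathcal{N}_{max}(t)\}\le\mathcal{N}(t)\le\max\{\mathcal{N}_{min}(t),\mathcal{N}_{max}(t)\},$$ where $\mathcal{N}_{min}$ and $\mathcal{N}_{max}$ are the solutions of the logistic equations $\frac{du}{dt}=\xi^{\pm}u\left(1-\frac uK\right)$, $u(0)=\mathcal{N}(0)$, with $\xi^-=\min\{r_1,\dots,r_N\}$ (for $\mathcal{N}_{min}$) and $\xi^+=\max\{r_1,\dots,r_N\}$ (for $\mathcal{N}_{max}$). *)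

theory Defs
  imports "HOL-Analysis.Analysis"
begin

text \<open>A nonnegative square matrix is irreducible iff its associated directed graph
(edge i \<rightarrow> j iff the (i,j) entry is nonzero) is strongly connected.\<close>
definition irreducible_matrix :: "real^'n^'n \<Rightarrow> bool" where
  "irreducible_matrix A \<longleftrightarrow>
     (\<forall>i j. (i, j) \<in> {(k, l). A $ k $ l \<noteq> 0}\<^sup>*)"

end

theory Submission
  imports Defs
begin

(* The solution stays nonnegative: a negative minimal component would have to cross the barrier
   -eps * exp ((M + 1) * t), but at such a crossing its derivative is too large.  Summing the
   equations, the migration terms cancel by the symmetry of mu, so the total population N
   satisfies N' = rho N (1 - N / K), where rho = (sum_j r_j v_j) / N is a weighted mean of the r_i
   and hence lies in [xi^-, xi^+].  The substitution z = 1/N - 1/K linearises this to z' = -rho z,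
   so z(t) lies between z(0) exp (-xi^+ t) and z(0) exp (-xi^- t); these two endpoints are exactly
   the values of z for the logistic solutions with constant rates xi^+ and xi^-.  This gives the
   comparison with N_min and N_max as well as exponential convergence with rate xi^-. *)

lemma DERIV_nonneg_imp_nondecreasing_within:
  fixes f :: "real \<Rightarrow> real"
  assumes "a \<le> b"
    and "\<And>x. x \<in> {a..b} \<Longrightarrow> \<exists>y\<ge>0. (f has_real_derivative y) (at x within {a..b})"
  shows "f a \<le> f b"
proof -
  obtain f' where
    f': "\<And>x. x \<in> {a..b} \<Longrightarrow> f' x \<ge> 0 \<and> (f has_real_derivative f' x) (at x within {a..b})"
    using assms(2) by metis
  obtain x where "x \<in> {a..b}" "f b - f a = f' x * (b - a)"
    using mvt_very_simple[OF \<open>a \<le> b\<close>, of f "\<lambda>x h. f' x * h"] f'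
    by (auto simp: has_field_derivative_def mult.commute[of _ "f' _"])
  then show ?thesis
    using f' \<open>a \<le> b\<close> by (metis diff_ge_0_iff_ge zero_le_mult_iff)
qed

lemma has_vector_derivative_vec_nth:
  "(x has_vector_derivative x') F \<Longrightarrow> ((\<lambda>t. x t $ i) has_real_derivative x' $ i) F"
  using bounded_linear.has_vector_derivative[OF bounded_linear_vec_nth]
  by (simp add: has_real_derivative_iff_has_vector_derivative)

lemma first_zero_of_finite_family:
  fixes g :: "'i::finite \<Rightarrow> real \<Rightarrow> real"
  assumes cont: "\<And>i. continuous_on {0..T} (g i)"
    and pos0: "\<And>i. g i 0 > 0"
    and t: "t \<in> {0..T}" "g i t \<le> 0"
  obtains s j where "s \<in> {0<..T}" "g j s = 0" "\<And>k. g k s \<ge> 0"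
    "\<And>k x. x \<in> {0..<s} \<Longrightarrow> g k x > 0"
proof -
  define A where "A = (\<Union>k. {x \<in> {0..T}. g k x \<le> 0})"
  have "closed A"
    unfolding A_def by (intro closed_UN finite_UNIV ballI continuous_closed_preimage_constant
        continuous_on_closed_Collect_le cont continuous_on_const) auto
  moreover have "t \<in> A" "bdd_below A"
    using t unfolding A_def by (auto intro: bdd_belowI[of _ 0])
  ultimately have "Inf A \<in> A" and Inf_le: "\<And>x. x \<in> A \<Longrightarrow> Inf A \<le> x"
    by (auto intro: closed_contains_Inf cInf_lower)
  define s where "s = Inf A"
  obtain j where s: "s \<in> {0..T}" "g j s \<le> 0"
    using \<open>Inf A \<in> A\<close> unfolding A_def s_def by auto
  have before: "g k x > 0" if "x \<in> {0..<s}" for k x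
    using Inf_le[of x] that s(1) unfolding A_def s_def by (force simp: not_less)
  have at_s: "g k s \<ge> 0" for k
  proof (rule ccontr)
    assume "\<not> g k s \<ge> 0"
    moreover have "continuous_on {0..s} (g k)"
      using continuous_on_subset[OF cont] s(1) by auto
    ultimately obtain x where "0 \<le> x" "x \<le> s" "g k x = 0"
      using IVT2'[of "g k" s 0 0] pos0[of k] s(1) by auto
    then show False
      using before[of x k] \<open>\<not> g k s \<ge> 0\<close> by (cases "x = s") auto
  qed
  have "s \<noteq> 0"
    using s(2) pos0[of j] by auto
  then show ?thesis
    using that[of s j] s at_s[of j] at_s before by (simp add: order_antisym)
qed

lemma first_zero:
  fixes g :: "real \<Rightarrow> real"
  assumes "continuous_on {0..T} g" "g 0 > 0" "t \<in> {0..T}" "g t \<le> 0"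
  obtains s where "s \<in> {0<..T}" "g s = 0" "\<And>x. x \<in> {0..<s} \<Longrightarrow> g x > 0"
  using first_zero_of_finite_family[where g = "\<lambda>_::unit. g"] assms by metis

section \<open>Invariance of the nonnegative orthant\<close>

lemma quasi_positive_barrier:
  fixes x f :: "real \<Rightarrow> real^'n"
  assumes deriv: "\<And>t. t \<in> {0..T} \<Longrightarrow> (x has_vector_derivative f t) (at t within {0..T})"
    and init: "\<And>i. x 0 $ i \<ge> 0"
    and min_comp: "\<And>t i. t \<in> {0..T} \<Longrightarrow> x t $ i < 0 \<Longrightarrow> (\<forall>k. x t $ i \<le> x t $ k) \<Longrightarrow>
        M * x t $ i \<le> f t $ i"
    and t: "t \<in> {0..T}" and "\<epsilon> > 0"
  shows "x t $ i + \<epsilon> * exp ((M + 1) * t) > 0"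
proof (rule ccontr)
  assume crossed: "\<not> ?thesis"
  define g where "g k s = x s $ k + \<epsilon> * exp ((M + 1) * s)" for k s
  have dg: "(g k has_real_derivative f s $ k + \<epsilon> * (exp ((M + 1) * s) * (M + 1)))
      (at s within {0..T})" if "s \<in> {0..T}" for k s
    unfolding g_def using has_vector_derivative_vec_nth[OF deriv[OF that], of k]
    by (auto intro!: derivative_eq_intros)
  have "continuous_on {0..T} (g k)" for k
    using dg by (rule DERIV_continuous_on)
  moreover have "g k 0 > 0" for k
    using init[of k] \<open>\<epsilon> > 0\<close> unfolding g_def by (simp add: add_nonneg_pos)
  moreover have "g i t \<le> 0"
    using crossed unfolding g_def by simp
  ultimately obtain s j where s: "s \<in> {0<..T}" "g j s = 0" "\<And>k. g k s \<ge> 0"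
      and before: "\<And>k y. y \<in> {0..<s} \<Longrightarrow> g k y > 0"
    using first_zero_of_finite_family t by metis
  define E where "E = exp ((M + 1) * s)"
  have xj: "x s $ j = - \<epsilon> * E" and xj_min: "\<forall>k. x s $ j \<le> x s $ k"
    using s(2,3) unfolding g_def E_def by (auto simp: add_eq_0_iff)
  have "\<epsilon> * E > 0"
    using \<open>\<epsilon> > 0\<close> by (simp add: E_def)
  then have "M * x s $ j \<le> f s $ j"
    using min_comp[OF _ _ xj_min] xj s(1) by auto
  then have "f s $ j + \<epsilon> * (E * (M + 1)) > 0"
    using \<open>\<epsilon> * E > 0\<close> xj by (simp add: algebra_simps)
  then obtain d where "d > 0" and d: "\<And>h. h > 0 \<Longrightarrow> s - h \<in> {0..T} \<Longrightarrow> h < d \<Longrightarrow> g j (s - h) < 0"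
    using has_real_derivative_pos_inc_left[OF dg[of s j]] s(1,2) unfolding E_def by fastforce
  define h where "h = min (d / 2) (s / 2)"
  have h: "0 < h" "h < d" "h < s"
    using \<open>d > 0\<close> s(1) unfolding h_def by auto
  have "g j (s - h) < 0"
    using d[of h] h s(1) by auto
  moreover have "g j (s - h) > 0"
    using before[of "s - h" j] h by auto
  ultimately show False
    by simp
qed

lemma nonneg_invariant_quasi_positive:
  fixes x f :: "real \<Rightarrow> real^'n"
  assumes deriv: "\<And>t. t \<in> {0..T} \<Longrightarrow> (x has_vector_derivative f t) (at t within {0..T})"
    and init: "\<And>i. x 0 $ i \<ge> 0"
    and min_comp: "\<And>t i. t \<in> {0..T} \<Longrightarrow> x t $ i < 0 \<Longrightarrow> (\<forall>k. x t $ i \<le> x t $ k) \<Longrightarrow>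
        M * x t $ i \<le> f t $ i"
    and t: "t \<in> {0..T}"
  shows "x t $ i \<ge> 0"
proof (rule ccontr)
  assume "\<not> x t $ i \<ge> 0"
  then have "x t $ i + (- x t $ i / 2 / exp ((M + 1) * t)) * exp ((M + 1) * t) > 0"
    by (intro quasi_positive_barrier[OF deriv init min_comp t]) (simp_all add: divide_neg_pos)
  with \<open>\<not> x t $ i \<ge> 0\<close> show False
    by simp
qed

section \<open>Linear equations with bounded decay rate\<close>

lemma continuous_nonvanishing_same_sign:
  fixes z :: "real \<Rightarrow> real"
  assumes "continuous_on {a..b} z" "\<And>s. s \<in> {a..b} \<Longrightarrow> z s \<noteq> 0" "a \<le> b"
  shows "z b * z a > 0"
proof (rule ccontr)
  assume "\<not> z b * z a > 0"
  moreover have "continuous_on {a..b} (\<lambda>s. z s * z a)"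
    by (intro continuous_intros assms(1))
  moreover have "z a * z a > 0"
    using assms(2)[of a] assms(3) by (auto simp: zero_less_mult_iff)
  ultimately obtain s where "a \<le> s" "s \<le> b" "z s * z a = 0"
    using IVT2'[of "\<lambda>s. z s * z a" b 0 a] assms(3) by (auto simp: not_less)
  then show False
    using assms(2,3) by auto
qed

lemma mem_closed_segment_if_abs_bounds:
  fixes z c a b :: real
  assumes "z * c \<ge> 0" "\<bar>c\<bar> * a \<le> \<bar>z\<bar>" "\<bar>z\<bar> \<le> \<bar>c\<bar> * b"
  shows "z \<in> closed_segment (c * a) (c * b)"
proof -
  have "c * a \<le> z \<and> z \<le> c * b \<or> c * b \<le> z \<and> z \<le> c * a"
    using assms by (cases "c \<ge> 0") (auto simp: abs_if zero_le_mult_iff split: if_splits)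
  then show ?thesis
    by (auto simp: closed_segment_eq_real_ivl)
qed

lemma weighted_square_has_derivative:
  fixes z :: "real \<Rightarrow> real"
  assumes "(z has_real_derivative - \<rho> * z s) (at s within S)"
  shows "((\<lambda>s. (z s * exp (c * s))\<^sup>2) has_real_derivative 2 * (c - \<rho>) * (z s * exp (c * s))\<^sup>2)
    (at s within S)"
  by (rule derivative_eq_intros assms refl | simp add: algebra_simps power2_eq_square)+

lemma linear_decay_abs_bounds:
  fixes z :: "real \<Rightarrow> real"
  assumes deriv: "\<And>s. s \<in> {0..T} \<Longrightarrow>
      \<exists>\<rho>\<in>{\<alpha>..\<beta>}. (z has_real_derivative - \<rho> * z s) (at s within {0..T})"
    and t: "t \<in> {0..T}"
  shows "\<bar>z t\<bar> * exp (\<alpha> * t) \<le> \<bar>z 0\<bar>" and "\<bar>z 0\<bar> \<le> \<bar>z t\<bar> * exp (\<beta> * t)"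
proof -
  define W where "W c s = (z s * exp (c * s))\<^sup>2" for c s
  have W_deriv: "\<exists>\<rho>\<in>{\<alpha>..\<beta>}. (W c has_real_derivative 2 * (c - \<rho>) * W c s) (at s within {0..t})"
    if s: "s \<in> {0..t}" for c s
  proof -
    obtain \<rho> where \<rho>: "\<rho> \<in> {\<alpha>..\<beta>}" and dz: "(z has_real_derivative - \<rho> * z s) (at s within {0..T})"
      using deriv[of s] s t by auto
    have "(z has_real_derivative - \<rho> * z s) (at s within {0..t})"
      using dz by (rule has_field_derivative_subset) (use t in auto)
    then show ?thesis
      unfolding W_def by (rule bexI[OF weighted_square_has_derivative \<rho>])
  qed
  have W_nonneg: "W c s \<ge> 0" for c s
    by (simp add: W_def)
  have "- W \<alpha> 0 \<le> - W \<alpha> t"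
  proof (rule DERIV_nonneg_imp_nondecreasing_within[where f = "\<lambda>s. - W \<alpha> s"])
    fix s assume "s \<in> {0..t}"
    then obtain \<rho> where "\<rho> \<ge> \<alpha>"
        and "(W \<alpha> has_real_derivative 2 * (\<alpha> - \<rho>) * W \<alpha> s) (at s within {0..t})"
      using W_deriv[of s \<alpha>] by auto
    then show "\<exists>y\<ge>0. ((\<lambda>s. - W \<alpha> s) has_real_derivative y) (at s within {0..t})"
      by (intro exI[of _ "- (2 * (\<alpha> - \<rho>) * W \<alpha> s)"])
        (use W_nonneg[of \<alpha> s] in \<open>auto intro: DERIV_minus mult_nonpos_nonneg\<close>)
  qed (use t in auto)
  then show "\<bar>z t\<bar> * exp (\<alpha> * t) \<le> \<bar>z 0\<bar>"
    by (simp add: W_def abs_le_square_iff abs_mult flip: abs_le_square_iff)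
  have "W \<beta> 0 \<le> W \<beta> t"
  proof (rule DERIV_nonneg_imp_nondecreasing_within[where f = "W \<beta>"])
    fix s assume "s \<in> {0..t}"
    then obtain \<rho> where "\<rho> \<le> \<beta>"
        and "(W \<beta> has_real_derivative 2 * (\<beta> - \<rho>) * W \<beta> s) (at s within {0..t})"
      using W_deriv[of s \<beta>] by auto
    then show "\<exists>y\<ge>0. (W \<beta> has_real_derivative y) (at s within {0..t})"
      using W_nonneg[of \<beta> s] by (intro exI[of _ "2 * (\<beta> - \<rho>) * W \<beta> s"]) auto
  qed (use t in auto)
  then show "\<bar>z 0\<bar> \<le> \<bar>z t\<bar> * exp (\<beta> * t)"
    by (simp add: W_def abs_le_square_iff abs_mult flip: abs_le_square_iff)
qed

lemma linear_decay_in_closed_segment: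
  fixes z :: "real \<Rightarrow> real"
  assumes deriv: "\<And>s. s \<in> {0..T} \<Longrightarrow>
      \<exists>\<rho>\<in>{\<alpha>..\<beta>}. (z has_real_derivative - \<rho> * z s) (at s within {0..T})"
    and t: "t \<in> {0..T}"
  shows "z t \<in> closed_segment (z 0 * exp (- \<beta> * t)) (z 0 * exp (- \<alpha> * t))"
proof -
  have same_sign: "z t * z 0 \<ge> 0"
  proof (cases "z 0 = 0")
    case False
    then have "z s \<noteq> 0" if "s \<in> {0..t}" for s
      using linear_decay_abs_bounds(2)[OF deriv, of s] that t by auto
    moreover have "continuous_on {0..T} z"
      unfolding continuous_on_eq_continuous_within using deriv by (metis DERIV_continuous)
    then have "continuous_on {0..t} z"
      by (rule continuous_on_subset) (use t in auto)
    ultimately show ?thesis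
      using continuous_nonvanishing_same_sign[of 0 t z] t by auto
  qed simp
  then show ?thesis
    using linear_decay_abs_bounds[OF deriv t]
    by (intro mem_closed_segment_if_abs_bounds) (auto simp: exp_minus field_simps)
qed

section \<open>Logistic equations with bounded per-capita rate\<close>

lemma closed_segment_scaled_subset:
  fixes c a b :: real
  assumes "0 \<le> a" "a \<le> 1" "0 \<le> b" "b \<le> 1"
  shows "closed_segment (c * a) (c * b) \<subseteq> closed_segment 0 c"
  using assms unfolding subset_closed_segment in_segment by (auto simp: mult.commute)

lemma mem_closed_segment_if_reciprocal_mem:
  fixes x a b K :: real
  assumes "0 < a" "0 < b" "0 < x" "1 / x - 1 / K \<in> closed_segment (1 / a - 1 / K) (1 / b - 1 / K)"
  shows "x \<in> closed_segment a b"
proof -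
  have "1 / x \<in> closed_segment (1 / a) (1 / b)"
    using assms(4) by (auto simp: closed_segment_eq_real_ivl split: if_splits)
  then show ?thesis
    using assms(1-3)
    by (auto simp: closed_segment_eq_real_ivl split: if_splits simp flip: inverse_eq_divide)
qed

(* The per-capita rate is only required where u > 0: for the total population it is
   (sum_j r_j v_j) / N. *)
locale bounded_rate_logistic =
  fixes K \<alpha> \<beta> :: real and u D :: "real \<Rightarrow> real"
  assumes K_pos: "K > 0" and \<alpha>_nonneg: "0 \<le> \<alpha>" and u0_pos: "u 0 > 0"
    and deriv: "\<And>t. t \<ge> 0 \<Longrightarrow> (u has_real_derivative D t) (at t within {0..})"
    and rate: "\<And>t. t \<ge> 0 \<Longrightarrow> u t > 0 \<Longrightarrow> \<exists>\<rho>\<in>{\<alpha>..\<beta>}. D t = \<rho> * u t * (1 - u t / K)"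
begin

lemma \<alpha>_le_\<beta>: "\<alpha> \<le> \<beta>"
  using rate[of 0] u0_pos by auto

lemma reciprocal_gap_in_closed_segment_local:
  assumes pos: "\<And>s. s \<in> {0..T} \<Longrightarrow> u s > 0" and t: "t \<in> {0..T}"
  shows "1 / u t - 1 / K \<in>
    closed_segment ((1 / u 0 - 1 / K) * exp (- \<beta> * t)) ((1 / u 0 - 1 / K) * exp (- \<alpha> * t))"
proof (rule linear_decay_in_closed_segment[OF _ t, where z = "\<lambda>s. 1 / u s - 1 / K"])
  fix s :: real assume s: "s \<in> {0..T}"
  obtain \<rho> where "\<rho> \<in> {\<alpha>..\<beta>}" and D: "D s = \<rho> * u s * (1 - u s / K)"
    using rate[of s] pos[OF s] s by auto
  have "((\<lambda>s. 1 / u s - 1 / K) has_real_derivative - (D s / u s ^ 2)) (at s within {0..T})"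
    using deriv[of s] pos[OF s] s
    by (auto intro!: derivative_eq_intros intro: has_field_derivative_subset simp: power2_eq_square)
  moreover have "- (D s / u s ^ 2) = - \<rho> * (1 / u s - 1 / K)"
    using pos[OF s] K_pos unfolding D by (simp add: field_simps power2_eq_square)
  ultimately show "\<exists>\<rho>\<in>{\<alpha>..\<beta>}. ((\<lambda>s. 1 / u s - 1 / K) has_real_derivative - \<rho> * (1 / u s - 1 / K))
      (at s within {0..T})"
    using \<open>\<rho> \<in> {\<alpha>..\<beta>}\<close> by auto
qed

lemma u_in_closed_segment_local:
  assumes pos: "\<And>s. s \<in> {0..T} \<Longrightarrow> u s > 0" and t: "t \<in> {0..T}"
  shows "u t \<in> closed_segment K (u 0)"
proof (rule mem_closed_segment_if_reciprocal_mem[OF K_pos u0_pos pos[OF t]])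
  have "closed_segment ((1 / u 0 - 1 / K) * exp (- \<beta> * t)) ((1 / u 0 - 1 / K) * exp (- \<alpha> * t))
      \<subseteq> closed_segment 0 (1 / u 0 - 1 / K)"
    using \<alpha>_nonneg \<alpha>_le_\<beta> t by (intro closed_segment_scaled_subset) auto
  with reciprocal_gap_in_closed_segment_local[OF pos t]
  show "1 / u t - 1 / K \<in> closed_segment (1 / K - 1 / K) (1 / u 0 - 1 / K)"
    by auto
qed

(* While u stays positive it stays above m = min K (u 0), so it can never reach m / 2. *)
lemma u_pos:
  assumes "t \<ge> 0"
  shows "u t > 0"
proof (rule ccontr)
  assume "\<not> u t > 0"
  define m where "m = min K (u 0)"
  have "m > 0"
    using K_pos u0_pos by (simp add: m_def)
  have "continuous_on {0..} u"
    by (rule DERIV_continuous_on[where D = D]) (simp add: deriv)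
  then have "continuous_on {0..t} (\<lambda>s. u s - m / 2)"
    by (intro continuous_on_diff continuous_on_const) (auto elim: continuous_on_subset)
  moreover have "u 0 - m / 2 > 0" "u t - m / 2 \<le> 0"
    using \<open>m > 0\<close> \<open>\<not> u t > 0\<close> by (auto simp: m_def)
  ultimately obtain s where s: "s \<in> {0<..t}" "u s - m / 2 = 0"
      and before: "\<And>y. y \<in> {0..<s} \<Longrightarrow> u y - m / 2 > 0"
    using first_zero[of t "\<lambda>s. u s - m / 2" t] assms by auto
  have "u y > 0" if "y \<in> {0..s}" for y
    using before[of y] s \<open>m > 0\<close> that by (cases "y = s") auto
  then have "u s \<in> closed_segment K (u 0)"
    using s(1) by (intro u_in_closed_segment_local) auto
  with s(2) \<open>m > 0\<close> show False
    by (auto simp: m_def closed_segment_eq_real_ivl split: if_splits)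
qed

lemma u_in_closed_segment:
  assumes "t \<ge> 0"
  shows "u t \<in> closed_segment K (u 0)"
  using u_pos assms by (intro u_in_closed_segment_local[of t]) auto

lemma reciprocal_gap_in_closed_segment:
  assumes "t \<ge> 0"
  shows "1 / u t - 1 / K \<in>
    closed_segment ((1 / u 0 - 1 / K) * exp (- \<beta> * t)) ((1 / u 0 - 1 / K) * exp (- \<alpha> * t))"
  using u_pos assms by (intro reciprocal_gap_in_closed_segment_local[of t]) auto

lemma exp_convergence: "\<exists>C>0. \<forall>t\<ge>0. \<bar>u t - K\<bar> \<le> C * exp (- \<alpha> * t)"
proof -
  define c where "c = 1 / u 0 - 1 / K"
  have bound: "\<bar>u t - K\<bar> \<le> K * max K (u 0) * \<bar>c\<bar> * exp (- \<alpha> * t)" if t: "t \<ge> 0" for t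
  proof -
    have u_pos: "0 < u t" and u_le: "u t \<le> max K (u 0)"
      using u_in_closed_segment[OF t] K_pos u0_pos
      by (auto simp: closed_segment_eq_real_ivl split: if_splits)
    have "\<bar>c * exp (- \<beta> * t)\<bar> \<le> \<bar>c * exp (- \<alpha> * t)\<bar>"
      using \<alpha>_le_\<beta> t by (simp add: abs_mult mult_left_mono mult_right_mono)
    with reciprocal_gap_in_closed_segment[OF t] have "\<bar>1 / u t - 1 / K\<bar> \<le> \<bar>c * exp (- \<alpha> * t)\<bar>"
      unfolding closed_segment_eq_real_ivl c_def by (auto split: if_splits)
    then have gap_bound: "\<bar>1 / u t - 1 / K\<bar> \<le> \<bar>c\<bar> * exp (- \<alpha> * t)"
      by (simp add: abs_mult)
    have "\<bar>u t - K\<bar> = K * u t * \<bar>1 / u t - 1 / K\<bar>"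
      using K_pos u_pos by (simp add: field_simps abs_mult flip: abs_minus_commute)
    also have "\<dots> \<le> K * max K (u 0) * (\<bar>c\<bar> * exp (- \<alpha> * t))"
      using K_pos u_pos u_le gap_bound by (intro mult_mono) auto
    finally show ?thesis
      by (simp add: mult.assoc)
  qed
  show ?thesis
  proof (intro exI conjI allI impI)
    show "K * max K (u 0) * \<bar>c\<bar> + 1 > 0"
      using K_pos by (simp add: add_nonneg_pos)
    fix t :: real assume "t \<ge> 0"
    then show "\<bar>u t - K\<bar> \<le> (K * max K (u 0) * \<bar>c\<bar> + 1) * exp (- \<alpha> * t)"
      using bound[of t] by (smt (verit) exp_gt_zero mult_right_mono)
  qed
qed

end

lemma bounded_rate_logistic_constant_rate:
  assumes "K > 0" "0 \<le> \<xi>" "u 0 > 0"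
    and "\<And>t. t \<ge> 0 \<Longrightarrow> (u has_real_derivative \<xi> * u t * (1 - u t / K)) (at t within {0..})"
  shows "bounded_rate_logistic K \<xi> \<xi> u (\<lambda>t. \<xi> * u t * (1 - u t / K))"
  using assms by unfold_locales auto

lemma (in bounded_rate_logistic) sandwich:
  assumes u1: "\<And>t. t \<ge> 0 \<Longrightarrow> (u1 has_real_derivative \<alpha> * u1 t * (1 - u1 t / K)) (at t within {0..})"
      "u1 0 = u 0"
    and u2: "\<And>t. t \<ge> 0 \<Longrightarrow> (u2 has_real_derivative \<beta> * u2 t * (1 - u2 t / K)) (at t within {0..})"
      "u2 0 = u 0"
    and t: "t \<ge> 0"
  shows "min (u1 t) (u2 t) \<le> u t \<and> u t \<le> max (u1 t) (u2 t)"
proof -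
  interpret u1: bounded_rate_logistic K \<alpha> \<alpha> u1 "\<lambda>t. \<alpha> * u1 t * (1 - u1 t / K)"
    using K_pos \<alpha>_nonneg u0_pos u1 by (intro bounded_rate_logistic_constant_rate) auto
  interpret u2: bounded_rate_logistic K \<beta> \<beta> u2 "\<lambda>t. \<beta> * u2 t * (1 - u2 t / K)"
    using K_pos \<alpha>_nonneg \<alpha>_le_\<beta> u0_pos u2 by (intro bounded_rate_logistic_constant_rate) auto
  have "1 / u t - 1 / K \<in> closed_segment (1 / u2 t - 1 / K) (1 / u1 t - 1 / K)"
    using reciprocal_gap_in_closed_segment[OF t] u1.reciprocal_gap_in_closed_segment[OF t]
      u2.reciprocal_gap_in_closed_segment[OF t] u1(2) u2(2) by simp
  then have "u t \<in> closed_segment (u2 t) (u1 t)"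
    by (rule mem_closed_segment_if_reciprocal_mem[OF u2.u_pos[OF t] u1.u_pos[OF t] u_pos[OF t]])
  then show ?thesis
    by (auto simp: closed_segment_eq_real_ivl split: if_splits)
qed

section \<open>The patch model\<close>

lemma sum_symmetric_flux_eq_0:
  fixes \<mu> :: "'i \<Rightarrow> 'i \<Rightarrow> 'a::comm_ring"
  assumes "\<And>i j. \<mu> i j = \<mu> j i"
  shows "(\<Sum>i\<in>A. \<Sum>j\<in>A. \<mu> i j * (w j - w i)) = 0"
proof -
  have "(\<Sum>i\<in>A. \<Sum>j\<in>A. \<mu> i j * w j) = (\<Sum>i\<in>A. \<Sum>j\<in>A. \<mu> i j * w i)"
    by (subst sum.swap) (simp add: assms)
  then show ?thesis
    by (simp add: right_diff_distrib sum_subtractf)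
qed

lemma weighted_sum_bounds_Min_Max:
  fixes r w :: "'i \<Rightarrow> real"
  assumes "finite A" "\<And>i. i \<in> A \<Longrightarrow> w i \<ge> 0"
  shows "Min (r ` A) * sum w A \<le> (\<Sum>i\<in>A. r i * w i)"
    and "(\<Sum>i\<in>A. r i * w i) \<le> Max (r ` A) * sum w A"
  using assms by (auto simp: sum_distrib_left intro!: sum_mono mult_right_mono)

lemma patch_logistic_solution_nonneg:
  fixes K :: real and r :: "real^'n" and \<mu> :: "real^'n^'n" and v :: "real \<Rightarrow> real^'n"
  assumes mu_nonneg: "\<And>i j. \<mu> $ i $ j \<ge> 0"
    and v_ode: "\<And>t. t \<ge> 0 \<Longrightarrow>
        (v has_vector_derivative
           (\<chi> i. v t $ i * (r $ i - (1 / K) * (\<Sum>j\<in>UNIV. r $ j * v t $ j))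
                 + (\<Sum>j\<in>UNIV. \<mu> $ i $ j * (v t $ j - v t $ i))))
        (at t within {0..})"
    and v0_nonneg: "\<And>i. v 0 $ i \<ge> 0"
    and t: "t \<ge> 0"
  shows "v t $ i \<ge> 0"
proof -
  define P where "P s = (1 / K) * (\<Sum>j\<in>UNIV. r $ j * v s $ j)" for s
  define f where "f s = (\<chi> i. v s $ i * (r $ i - P s) + (\<Sum>j\<in>UNIV. \<mu> $ i $ j * (v s $ j - v s $ i)))"
    for s
  have deriv: "(v has_vector_derivative f s) (at s within {0..t})" if "s \<in> {0..t}" for s
    using v_ode[of s] that unfolding f_def P_def
    by (auto intro: has_vector_derivative_within_subset)
  then have "continuous_on {0..t} v"
    by (rule continuous_on_vector_derivative)
  then have "continuous_on {0..t} P"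
    unfolding P_def by (intro continuous_intros)
  then obtain B where B: "\<And>s. s \<in> {0..t} \<Longrightarrow> \<bar>P s\<bar> \<le> B"
    using compact_continuous_image[OF _ compact_Icc, of 0 t P] compact_imp_bounded
    by (force simp: bounded_real)
  show ?thesis
  proof (rule nonneg_invariant_quasi_positive[OF deriv v0_nonneg,
        where M = "Max (range (\<lambda>i. r $ i)) + B"])
    fix s i assume s: "s \<in> {0..t}" and neg: "v s $ i < 0" and min: "\<forall>k. v s $ i \<le> v s $ k"
    have "r $ i \<le> Max (range (\<lambda>i. r $ i))"
      by (rule Max_ge) auto
    then have "r $ i - P s \<le> Max (range (\<lambda>i. r $ i)) + B"
      using B[OF s] by linarith
    then have "(Max (range (\<lambda>i. r $ i)) + B) * v s $ i \<le> v s $ i * (r $ i - P s)"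
      using neg by (simp add: mult.commute mult_left_mono_neg)
    moreover have "(\<Sum>j\<in>UNIV. \<mu> $ i $ j * (v s $ j - v s $ i)) \<ge> 0"
      using mu_nonneg min by (intro sum_nonneg mult_nonneg_nonneg) auto
    ultimately show "(Max (range (\<lambda>i. r $ i)) + B) * v s $ i \<le> f s $ i"
      unfolding f_def by simp
  qed (use t in auto)
qed

lemma patch_logistic_total_has_derivative:
  fixes K :: real and r :: "real^'n" and \<mu> :: "real^'n^'n" and v :: "real \<Rightarrow> real^'n"
  assumes mu_sym: "\<And>i j. \<mu> $ i $ j = \<mu> $ j $ i"
    and v_deriv: "(v has_vector_derivative
           (\<chi> i. v t $ i * (r $ i - (1 / K) * (\<Sum>j\<in>UNIV. r $ j * v t $ j))
                 + (\<Sum>j\<in>UNIV. \<mu> $ i $ j * (v t $ j - v t $ i)))) F"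
  shows "((\<lambda>t. \<Sum>i\<in>UNIV. v t $ i) has_real_derivative
      (\<Sum>j\<in>UNIV. r $ j * v t $ j) * (1 - (\<Sum>i\<in>UNIV. v t $ i) / K)) F"
proof -
  define S where "S = (\<Sum>j\<in>UNIV. r $ j * v t $ j)"
  have "((\<lambda>t. \<Sum>i\<in>UNIV. v t $ i) has_real_derivative
      (\<Sum>i\<in>UNIV. v t $ i * (r $ i - (1 / K) * S) + (\<Sum>j\<in>UNIV. \<mu> $ i $ j * (v t $ j - v t $ i)))) F"
    using has_vector_derivative_vec_nth[OF v_deriv] unfolding S_def by (intro DERIV_sum) simp
  also have "(\<Sum>i\<in>UNIV. v t $ i * (r $ i - (1 / K) * S) + (\<Sum>j\<in>UNIV. \<mu> $ i $ j * (v t $ j - v t $ i)))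
      = (\<Sum>i\<in>UNIV. r $ i * v t $ i) - S / K * (\<Sum>i\<in>UNIV. v t $ i)"
    using sum_symmetric_flux_eq_0[where \<mu> = "\<lambda>i j. \<mu> $ i $ j" and A = UNIV and w = "\<lambda>j. v t $ j"]
      mu_sym
    by (simp add: sum.distrib sum_subtractf sum_distrib_left algebra_simps)
  finally show ?thesis
    by (simp add: S_def algebra_simps)
qed

lemma patch_logistic_total_bounded_rate:
  fixes K :: real and r :: "real^'n" and \<mu> :: "real^'n^'n" and v :: "real \<Rightarrow> real^'n"
  assumes K_pos: "K > 0"
    and r_pos: "\<And>i. r $ i > 0"
    and mu_nonneg: "\<And>i j. \<mu> $ i $ j \<ge> 0"
    and mu_sym: "\<And>i j. \<mu> $ i $ j = \<mu> $ j $ i"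
    and v_ode: "\<And>t. t \<ge> 0 \<Longrightarrow>
        (v has_vector_derivative
           (\<chi> i. v t $ i * (r $ i - (1 / K) * (\<Sum>j\<in>UNIV. r $ j * v t $ j))
                 + (\<Sum>j\<in>UNIV. \<mu> $ i $ j * (v t $ j - v t $ i))))
        (at t within {0..})"
    and v0_nonneg: "\<And>i. v 0 $ i \<ge> 0"
    and v0_nonzero: "v 0 \<noteq> 0"
  shows "bounded_rate_logistic K (Min (range (\<lambda>i. r $ i))) (Max (range (\<lambda>i. r $ i)))
    (\<lambda>t. \<Sum>i\<in>UNIV. v t $ i) (\<lambda>t. (\<Sum>j\<in>UNIV. r $ j * v t $ j) * (1 - (\<Sum>i\<in>UNIV. v t $ i) / K))"
proof
  define N where "N t = (\<Sum>i\<in>UNIV. v t $ i)" for t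
  define S where "S t = (\<Sum>j\<in>UNIV. r $ j * v t $ j)" for t
  have v_nonneg: "v t $ i \<ge> 0" if "t \<ge> 0" for t i
    using patch_logistic_solution_nonneg[OF mu_nonneg v_ode v0_nonneg that] .
  show "K > 0"
    by (fact K_pos)
  show "0 \<le> Min (range (\<lambda>i. r $ i))"
    using r_pos by (simp add: less_imp_le)
  obtain i0 where "v 0 $ i0 \<noteq> 0"
    using v0_nonzero by (auto simp: vec_eq_iff)
  then show "(\<Sum>i\<in>UNIV. v 0 $ i) > 0"
    using v_nonneg[of 0] by (intro sum_pos2[of _ i0]) (auto simp: less_le)
  show "((\<lambda>t. \<Sum>i\<in>UNIV. v t $ i) has_real_derivative
      (\<Sum>j\<in>UNIV. r $ j * v t $ j) * (1 - (\<Sum>i\<in>UNIV. v t $ i) / K)) (at t within {0..})"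
    if "t \<ge> 0" for t
    by (rule patch_logistic_total_has_derivative[OF mu_sym v_ode[OF that]])
  fix t :: real assume t: "t \<ge> 0" and "(\<Sum>i\<in>UNIV. v t $ i) > 0"
  then have "N t > 0"
    by (simp add: N_def)
  have "S t / N t \<in> {Min (range (\<lambda>i. r $ i))..Max (range (\<lambda>i. r $ i))}"
    using weighted_sum_bounds_Min_Max[of UNIV "\<lambda>i. v t $ i" "\<lambda>i. r $ i"] v_nonneg[OF t] \<open>N t > 0\<close>
    unfolding N_def S_def by (simp add: pos_le_divide_eq pos_divide_le_eq)
  moreover have "S t * (1 - N t / K) = S t / N t * N t * (1 - N t / K)"
    using \<open>N t > 0\<close> by simp
  ultimately show "\<exists>\<rho>\<in>{Min (range (\<lambda>i. r $ i))..Max (range (\<lambda>i. r $ i))}.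
      (\<Sum>j\<in>UNIV. r $ j * v t $ j) * (1 - (\<Sum>i\<in>UNIV. v t $ i) / K)
        = \<rho> * (\<Sum>i\<in>UNIV. v t $ i) * (1 - (\<Sum>i\<in>UNIV. v t $ i) / K)"
    unfolding N_def S_def by blast
qed

theorem lemma5p2:
  fixes K :: real and r :: "real^'n" and \<mu> :: "real^'n^'n"
    and v :: "real \<Rightarrow> real^'n" and Nmin Nmax :: "real \<Rightarrow> real"
  assumes K_pos: "K > 0"
    and r_pos: "\<And>i. r $ i > 0"
    and mu_nonneg: "\<And>i j. \<mu> $ i $ j \<ge> 0"
    and mu_sym: "\<And>i j. \<mu> $ i $ j = \<mu> $ j $ i"
    and mu_irred: "irreducible_matrix \<mu>"
    and v_ode: "\<And>t. t \<ge> 0 \<Longrightarrow>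
        (v has_vector_derivative
           (\<chi> i. v t $ i * (r $ i - (1 / K) * (\<Sum>j\<in>UNIV. r $ j * v t $ j))
                 + (\<Sum>j\<in>UNIV. \<mu> $ i $ j * (v t $ j - v t $ i))))
        (at t within {0..})"
    and v0_nonneg: "\<And>i. v 0 $ i \<ge> 0"
    and v0_nonzero: "v 0 \<noteq> 0"
    and Nmin_ode: "\<And>t. t \<ge> 0 \<Longrightarrow>
        (Nmin has_real_derivative
           (Min (range (\<lambda>i. r $ i)) * Nmin t * (1 - Nmin t / K))) (at t within {0..})"
    and Nmin_init: "Nmin 0 = (\<Sum>i\<in>UNIV. v 0 $ i)"
    and Nmax_ode: "\<And>t. t \<ge> 0 \<Longrightarrow>
        (Nmax has_real_derivative
           (Max (range (\<lambda>i. r $ i)) * Nmax t * (1 - Nmax t / K))) (at t within {0..})"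
    and Nmax_init: "Nmax 0 = (\<Sum>i\<in>UNIV. v 0 $ i)"
  shows "(\<exists>C c. C > 0 \<and> c > 0 \<and>
            (\<forall>t\<ge>0. \<bar>(\<Sum>i\<in>UNIV. v t $ i) - K\<bar> \<le> C * exp (- c * t)))
       \<and> (\<forall>t\<ge>0. min (Nmin t) (Nmax t) \<le> (\<Sum>i\<in>UNIV. v t $ i)
                 \<and> (\<Sum>i\<in>UNIV. v t $ i) \<le> max (Nmin t) (Nmax t))"
proof -
  interpret N: bounded_rate_logistic K "Min (range (\<lambda>i. r $ i))" "Max (range (\<lambda>i. r $ i))"
      "\<lambda>t. \<Sum>i\<in>UNIV. v t $ i" "\<lambda>t. (\<Sum>j\<in>UNIV. r $ j * v t $ j) * (1 - (\<Sum>i\<in>UNIV. v t $ i) / K)"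
    by (rule patch_logistic_total_bounded_rate[OF K_pos r_pos mu_nonneg mu_sym v_ode v0_nonneg
          v0_nonzero])
  have "Min (range (\<lambda>i. r $ i)) > 0"
    using r_pos by simp
  moreover obtain C where "C > 0"
    "\<forall>t\<ge>0. \<bar>(\<Sum>i\<in>UNIV. v t $ i) - K\<bar> \<le> C * exp (- Min (range (\<lambda>i. r $ i)) * t)"
    using N.exp_convergence by blast
  moreover have
    "min (Nmin t) (Nmax t) \<le> (\<Sum>i\<in>UNIV. v t $ i) \<and> (\<Sum>i\<in>UNIV. v t $ i) \<le> max (Nmin t) (Nmax t)"
    if "t \<ge> 0" for t
    using N.sandwich[OF Nmin_ode Nmin_init Nmax_ode Nmax_init that] .
  ultimately show ?thesis
    by blast
qed

end
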